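(* Let $\mathcal C$ be a cartesian closed category with regular epi-mono factorizations and $S$ an object of $\mathcal C$ having at least one global element $1\to S$. Then for every $T$-algebra $(X,h)$ of the state monad $T$ on $S$, the morphism $e_X^*:X\to Y^S$ (with $Y=L(X,h)$) has a section.
   Context: $U(X)=X^S$, $F(X)=S\times X$, $F\dashv U$, $T=UF$, $TX=(S\times X)^S$. For $f:S\times X\to Z$, $f^*:X\to Z^S$ is its transpose. $\epsilon$ is the counit (evaluation), $\eta_X=(\mathrm{id}_{S\times X})^*$, $\mu_X=(\epsilon_{S\times X})^S$; $q_X:S\times X\to X$ is the second projection. A $T$-algebra is $(X,h)$, $h:TX\to X$, with $h\circ Th=h\circ\mu_X$, $h\circ\eta_X=\mathrm{id}_X$. For a $T$-algebra $(X,h)$, $f_X=h\circ q_{S\times X}^*:S\times X\to X$ is factored as $f_X=m_X\circ e_X$ with $e_X:S\times X\to Y$ a regular epimorphism and $m_X:Y\to X$ a monomorphism; $Y=L(X,h)$ and $e_X^*:X\to Y^S$ is the transpose of $e_X$. *)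

theory Defs
  imports Main
begin

text \<open>A category is given by a set of arrows Arr, domain/codomain maps, composition
  (Comp g f is g after f) and identities; every element of the object type is an object. Exp S Z is the exponential Z^S, Ev S Z : S x Z^S -> Z is the
  counit (evaluation) and Curry S X f : X -> Z^S is the transpose of f : S x X -> Z.\<close>

record ('o, 'm) ccc_data =
  Arr :: "'m set"
  Dom :: "'m \<Rightarrow> 'o"
  Cod :: "'m \<Rightarrow> 'o"
  Comp :: "'m \<Rightarrow> 'm \<Rightarrow> 'm"
  Id :: "'o \<Rightarrow> 'm"
  Term :: 'o
  Bang :: "'o \<Rightarrow> 'm"
  Prod :: "'o \<Rightarrow> 'o \<Rightarrow> 'o"
  Fst :: "'o \<Rightarrow> 'o \<Rightarrow> 'm"
  Snd :: "'o \<Rightarrow> 'o \<Rightarrow> 'm"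
  Pair :: "'m \<Rightarrow> 'm \<Rightarrow> 'm"
  Exp :: "'o \<Rightarrow> 'o \<Rightarrow> 'o"
  Ev :: "'o \<Rightarrow> 'o \<Rightarrow> 'm"
  Curry :: "'o \<Rightarrow> 'o \<Rightarrow> 'm \<Rightarrow> 'm"

definition hom :: "('o, 'm, 'x) ccc_data_scheme \<Rightarrow> 'o \<Rightarrow> 'o \<Rightarrow> 'm set" where
  "hom C A B = {f \<in> Arr C. Dom C f = A \<and> Cod C f = B}"

definition prod_mor :: "('o, 'm, 'x) ccc_data_scheme \<Rightarrow> 'o \<Rightarrow> 'o \<Rightarrow> 'm \<Rightarrow> 'm \<Rightarrow> 'm" where
  "prod_mor C A B f g = Pair C (Comp C f (Fst C A B)) (Comp C g (Snd C A B))"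

locale ccc =
  fixes C :: "('o, 'm, 'x) ccc_data_scheme"
  assumes dom_cod_arr: "f \<in> Arr C \<Longrightarrow> f \<in> hom C (Dom C f) (Cod C f)"
    and id_hom: "Id C A \<in> hom C A A"
    and comp_hom: "f \<in> hom C A B \<Longrightarrow> g \<in> hom C B D \<Longrightarrow> Comp C g f \<in> hom C A D"
    and comp_assoc: "f \<in> hom C A B \<Longrightarrow> g \<in> hom C B D \<Longrightarrow> k \<in> hom C D E \<Longrightarrow>
         Comp C k (Comp C g f) = Comp C (Comp C k g) f"
    and id_left: "f \<in> hom C A B \<Longrightarrow> Comp C (Id C B) f = f"
    and id_right: "f \<in> hom C A B \<Longrightarrow> Comp C f (Id C A) = f"
    and bang_hom: "Bang C A \<in> hom C A (Term C)"
    and bang_unique: "f \<in> hom C A (Term C) \<Longrightarrow> f = Bang C A"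
    and fst_hom: "Fst C A B \<in> hom C (Prod C A B) A"
    and snd_hom: "Snd C A B \<in> hom C (Prod C A B) B"
    and pair_hom: "f \<in> hom C Z A \<Longrightarrow> g \<in> hom C Z B \<Longrightarrow> Pair C f g \<in> hom C Z (Prod C A B)"
    and fst_pair: "f \<in> hom C Z A \<Longrightarrow> g \<in> hom C Z B \<Longrightarrow> Comp C (Fst C A B) (Pair C f g) = f"
    and snd_pair: "f \<in> hom C Z A \<Longrightarrow> g \<in> hom C Z B \<Longrightarrow> Comp C (Snd C A B) (Pair C f g) = g"
    and pair_unique: "k \<in> hom C Z (Prod C A B) \<Longrightarrow>
         k = Pair C (Comp C (Fst C A B) k) (Comp C (Snd C A B) k)"
    and ev_hom: "Ev C S Z \<in> hom C (Prod C S (Exp C S Z)) Z"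
    and curry_hom: "f \<in> hom C (Prod C S X) Z \<Longrightarrow> Curry C S X f \<in> hom C X (Exp C S Z)"
    and ev_curry: "f \<in> hom C (Prod C S X) Z \<Longrightarrow>
         Comp C (Ev C S Z) (prod_mor C S X (Id C S) (Curry C S X f)) = f"
    and curry_unique: "g \<in> hom C X (Exp C S Z) \<Longrightarrow>
         Curry C S X (Comp C (Ev C S Z) (prod_mor C S X (Id C S) g)) = g"

definition is_mono :: "('o, 'm, 'x) ccc_data_scheme \<Rightarrow> 'm \<Rightarrow> bool" where
  "is_mono C m \<longleftrightarrow> m \<in> Arr C \<and>
     (\<forall>A. \<forall>f \<in> hom C A (Dom C m). \<forall>g \<in> hom C A (Dom C m).
        Comp C m f = Comp C m g \<longrightarrow> f = g)"

definition regular_epi :: "('o, 'm, 'x) ccc_data_scheme \<Rightarrow> 'm \<Rightarrow> bool" where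
  "regular_epi C e \<longleftrightarrow> e \<in> Arr C \<and>
     (\<exists>K. \<exists>u \<in> hom C K (Dom C e). \<exists>v \<in> hom C K (Dom C e).
        Comp C e u = Comp C e v \<and>
        (\<forall>Z. \<forall>f \<in> hom C (Dom C e) Z. Comp C f u = Comp C f v \<longrightarrow>
           (\<exists>!k. k \<in> hom C (Cod C e) Z \<and> Comp C k e = f)))"

definition has_regular_epi_mono_factorizations :: "('o, 'm, 'x) ccc_data_scheme \<Rightarrow> bool" where
  "has_regular_epi_mono_factorizations C \<longleftrightarrow>
     (\<forall>f \<in> Arr C. \<exists>Y e m. e \<in> hom C (Dom C f) Y \<and> m \<in> hom C Y (Cod C f) \<and>
        regular_epi C e \<and> is_mono C m \<and> f = Comp C m e)"

definition stT :: "('o, 'm, 'x) ccc_data_scheme \<Rightarrow> 'o \<Rightarrow> 'o \<Rightarrow> 'o" where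
  "stT C S X = Exp C S (Prod C S X)"

text \<open>Action of T on a morphism g : X -> X', namely (S x g)^S.\<close>
definition stT_mor :: "('o, 'm, 'x) ccc_data_scheme \<Rightarrow> 'o \<Rightarrow> 'o \<Rightarrow> 'm \<Rightarrow> 'm" where
  "stT_mor C S X g = Curry C S (stT C S X)
     (Comp C (prod_mor C S X (Id C S) g) (Ev C S (Prod C S X)))"

definition st_eta :: "('o, 'm, 'x) ccc_data_scheme \<Rightarrow> 'o \<Rightarrow> 'o \<Rightarrow> 'm" where
  "st_eta C S X = Curry C S X (Id C (Prod C S X))"

text \<open>mu_X = (eps_{S x X})^S : T T X -> T X\<close>
definition st_mu :: "('o, 'm, 'x) ccc_data_scheme \<Rightarrow> 'o \<Rightarrow> 'o \<Rightarrow> 'm" where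
  "st_mu C S X = Curry C S (stT C S (stT C S X))
     (Comp C (Ev C S (Prod C S X)) (Ev C S (Prod C S (stT C S X))))"

definition T_algebra :: "('o, 'm, 'x) ccc_data_scheme \<Rightarrow> 'o \<Rightarrow> 'o \<Rightarrow> 'm \<Rightarrow> bool" where
  "T_algebra C S X h \<longleftrightarrow> h \<in> hom C (stT C S X) X \<and>
     Comp C h (stT_mor C S (stT C S X) h) = Comp C h (st_mu C S X) \<and>
     Comp C h (st_eta C S X) = Id C X"

text \<open>f_X = h o (q_{S x X})^* : S x X -> X, with q the second projection.\<close>
definition f_alg :: "('o, 'm, 'x) ccc_data_scheme \<Rightarrow> 'o \<Rightarrow> 'o \<Rightarrow> 'm \<Rightarrow> 'm" where
  "f_alg C S X h = Comp C h (Curry C S (Prod C S X) (Snd C S (Prod C S X)))"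

end

theory Submission imports Defs begin

text \<open>Write f = h \<circ> q^* : S \<times> X \<rightarrow> X. The algebra laws give f(s, h t) = f(ev(s, t)) for t : T X,
  hence f(s, f(s', x)) = f(s', x). Since S \<times> e is epi (S \<times> - is a left adjoint) and f = m \<circ> e, this
  yields f(s, m y) = m y. The map \<sigma> = h \<circ> (\<phi> \<mapsto> \<lambda>s. (s, m (\<phi> s))) : Y^S \<rightarrow> X therefore satisfies
  m (e (s, \<sigma> \<phi>)) = f(s, m (\<phi> s)) = m (\<phi> s), and e^* \<circ> \<sigma> = id because m is mono.\<close>

context ccc begin

abbreviation comp_infix (infixr "\<cdot>" 55) where "g \<cdot> f \<equiv> Comp C g f"

abbreviation snd_transpose :: "'o \<Rightarrow> 'o \<Rightarrow> 'm" where
  "snd_transpose S A \<equiv> Curry C S (Prod C S A) (Snd C S (Prod C S A))"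

lemma comp_pair:
  assumes f: "f \<in> hom C Z A" and g: "g \<in> hom C Z B" and k: "k \<in> hom C W Z"
  shows "Pair C f g \<cdot> k = Pair C (f \<cdot> k) (g \<cdot> k)"
proof -
  have "Pair C f g \<cdot> k \<in> hom C W (Prod C A B)"
    using f g k by (meson comp_hom pair_hom)
  moreover have "Fst C A B \<cdot> (Pair C f g \<cdot> k) = f \<cdot> k" "Snd C A B \<cdot> (Pair C f g \<cdot> k) = g \<cdot> k"
    using comp_assoc[OF k pair_hom[OF f g] fst_hom] comp_assoc[OF k pair_hom[OF f g] snd_hom]
      fst_pair[OF f g] snd_pair[OF f g] by simp_all
  ultimately show ?thesis
    using pair_unique by metis
qed

lemma prod_mor_hom:
  assumes "f \<in> hom C A A'" and "g \<in> hom C B B'"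
  shows "prod_mor C A B f g \<in> hom C (Prod C A B) (Prod C A' B')"
  unfolding prod_mor_def using assms by (meson comp_hom pair_hom fst_hom snd_hom)

lemma prod_mor_comp_pair:
  assumes f: "f \<in> hom C A A'" and g: "g \<in> hom C B B'"
    and a: "a \<in> hom C W A" and b: "b \<in> hom C W B"
  shows "prod_mor C A B f g \<cdot> Pair C a b = Pair C (f \<cdot> a) (g \<cdot> b)"
proof -
  have ab: "Pair C a b \<in> hom C W (Prod C A B)"
    using a b by (rule pair_hom)
  have "prod_mor C A B f g \<cdot> Pair C a b
      = Pair C ((f \<cdot> Fst C A B) \<cdot> Pair C a b) ((g \<cdot> Snd C A B) \<cdot> Pair C a b)"
    unfolding prod_mor_def by (rule comp_pair[OF comp_hom[OF fst_hom f] comp_hom[OF snd_hom g] ab])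
  also have "\<dots> = Pair C (f \<cdot> a) (g \<cdot> b)"
    using comp_assoc[OF ab fst_hom f] comp_assoc[OF ab snd_hom g] fst_pair[OF a b] snd_pair[OF a b]
    by simp
  finally show ?thesis .
qed

lemma prod_mor_comp:
  assumes f: "f \<in> hom C A' A''" and g: "g \<in> hom C B' B''"
    and f': "f' \<in> hom C A A'" and g': "g' \<in> hom C B B'"
  shows "prod_mor C A' B' f g \<cdot> prod_mor C A B f' g' = prod_mor C A B (f \<cdot> f') (g \<cdot> g')"
  unfolding prod_mor_def[of C A B]
  using prod_mor_comp_pair[OF f g comp_hom[OF fst_hom f'] comp_hom[OF snd_hom g']]
    comp_assoc[OF fst_hom f' f] comp_assoc[OF snd_hom g' g]
  by simp

lemma prod_mor_Id_comp:
  assumes "g \<in> hom C B' B''" and "k \<in> hom C B B'"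
  shows "prod_mor C S B' (Id C S) g \<cdot> prod_mor C S B (Id C S) k = prod_mor C S B (Id C S) (g \<cdot> k)"
  using prod_mor_comp[OF id_hom assms(1) id_hom assms(2)] id_left[OF id_hom] by simp

lemma prod_mor_Id_Id: "prod_mor C A B (Id C A) (Id C B) = Id C (Prod C A B)"
  unfolding prod_mor_def
  using pair_unique[OF id_hom] id_left[OF fst_hom] id_left[OF snd_hom]
    id_right[OF fst_hom] id_right[OF snd_hom]
  by metis

lemma snd_prod_mor:
  assumes "f \<in> hom C A A'" and g: "g \<in> hom C B B'"
  shows "Snd C A' B' \<cdot> prod_mor C A B f g = g \<cdot> Snd C A B"
  unfolding prod_mor_def using snd_pair[OF comp_hom[OF fst_hom assms(1)] comp_hom[OF snd_hom g]] .

lemma curry_comp: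
  assumes c: "c \<in> hom C (Prod C S Y) Z" and e: "e \<in> hom C A Y"
  shows "Curry C S Y c \<cdot> e = Curry C S A (c \<cdot> prod_mor C S A (Id C S) e)"
proof -
  have Cc: "Curry C S Y c \<in> hom C Y (Exp C S Z)"
    using c by (rule curry_hom)
  have "Ev C S Z \<cdot> prod_mor C S A (Id C S) (Curry C S Y c \<cdot> e)
      = (Ev C S Z \<cdot> prod_mor C S Y (Id C S) (Curry C S Y c)) \<cdot> prod_mor C S A (Id C S) e"
    using prod_mor_Id_comp[OF Cc e, symmetric]
      comp_assoc[OF prod_mor_hom[OF id_hom e] prod_mor_hom[OF id_hom Cc] ev_hom]
    by simp
  then show ?thesis
    using curry_unique[OF comp_hom[OF e Cc]] ev_curry[OF c] by simp
qed

lemma curry_ev: "Curry C S (Exp C S Z) (Ev C S Z) = Id C (Exp C S Z)"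
  using curry_unique[OF id_hom] id_right[OF ev_hom] by (simp add: prod_mor_Id_Id)

lemma mono_cancel:
  assumes "is_mono C m" and "m \<in> hom C Y X" and "f \<in> hom C A Y" and "g \<in> hom C A Y"
    and "m \<cdot> f = m \<cdot> g"
  shows "f = g"
  using assms unfolding is_mono_def hom_def by auto

lemma regular_epi_cancel:
  assumes re: "regular_epi C e" and e: "e \<in> hom C A Y"
    and g1: "g1 \<in> hom C Y Z" and g2: "g2 \<in> hom C Y Z" and eq: "g1 \<cdot> e = g2 \<cdot> e"
  shows "g1 = g2"
proof -
  have "Dom C e = A" "Cod C e = Y"
    using e unfolding hom_def by auto
  then obtain K u v where u: "u \<in> hom C K A" and v: "v \<in> hom C K A" and uv: "e \<cdot> u = e \<cdot> v"
    and coeq: "\<forall>Z. \<forall>f \<in> hom C A Z. f \<cdot> u = f \<cdot> v \<longrightarrow> (\<exists>!k. k \<in> hom C Y Z \<and> k \<cdot> e = f)"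
    using re unfolding regular_epi_def by auto
  have "(g1 \<cdot> e) \<cdot> u = (g1 \<cdot> e) \<cdot> v"
    using comp_assoc[OF u e g1] comp_assoc[OF v e g1] uv by simp
  then have "\<exists>!k. k \<in> hom C Y Z \<and> k \<cdot> e = g1 \<cdot> e"
    using coeq comp_hom[OF e g1] by simp
  then show ?thesis
    using g1 g2 eq by (metis (no_types, lifting))
qed

text \<open>S \<times> - is left adjoint to (-)^S, so it preserves epimorphisms.\<close>

lemma prod_mor_regular_epi_cancel:
  assumes re: "regular_epi C e" and e: "e \<in> hom C A Y"
    and u1: "u1 \<in> hom C (Prod C S Y) Z" and u2: "u2 \<in> hom C (Prod C S Y) Z"
    and eq: "u1 \<cdot> prod_mor C S A (Id C S) e = u2 \<cdot> prod_mor C S A (Id C S) e"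
  shows "u1 = u2"
proof -
  have "Curry C S Y u1 \<cdot> e = Curry C S Y u2 \<cdot> e"
    using curry_comp[OF u1 e] curry_comp[OF u2 e] eq by simp
  then have "Curry C S Y u1 = Curry C S Y u2"
    using regular_epi_cancel[OF re e curry_hom[OF u1] curry_hom[OF u2]] by blast
  then show ?thesis
    using ev_curry[OF u1] ev_curry[OF u2] by metis
qed

lemma stT_mor_hom:
  assumes "g \<in> hom C A B"
  shows "stT_mor C S A g \<in> hom C (stT C S A) (stT C S B)"
  unfolding stT_mor_def stT_def
  by (rule curry_hom[OF comp_hom[OF ev_hom prod_mor_hom[OF id_hom assms]]])

lemma st_mu_hom: "st_mu C S X \<in> hom C (stT C S (stT C S X)) (stT C S X)"
  unfolding st_mu_def stT_def by (rule curry_hom[OF comp_hom[OF ev_hom ev_hom]])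

lemma snd_transpose_hom: "snd_transpose S A \<in> hom C (Prod C S A) (stT C S A)"
  unfolding stT_def by (rule curry_hom[OF snd_hom])

lemma snd_transpose_comp:
  assumes k: "k \<in> hom C A (Prod C S B)"
  shows "snd_transpose S B \<cdot> k = Curry C S A (k \<cdot> Snd C S A)"
  using curry_comp[OF snd_hom k] snd_prod_mor[OF id_hom k] by simp

lemma curry_comp_ev_snd_transpose:
  assumes c: "c \<in> hom C (Prod C S A) Z"
  shows "Curry C S (stT C S A) (c \<cdot> Ev C S (Prod C S A)) \<cdot> snd_transpose S A
    = Curry C S (Prod C S A) (c \<cdot> Snd C S (Prod C S A))"
proof -
  have "Curry C S (stT C S A) (c \<cdot> Ev C S (Prod C S A)) \<cdot> snd_transpose S A
      = Curry C S (Prod C S A) ((c \<cdot> Ev C S (Prod C S A)) \<cdot> prod_mor C S (Prod C S A) (Id C S) (snd_transpose S A))"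
    using curry_comp[OF comp_hom[OF ev_hom c] snd_transpose_hom[unfolded stT_def]]
    unfolding stT_def .
  also have "\<dots> = Curry C S (Prod C S A) (c \<cdot> Snd C S (Prod C S A))"
    using comp_assoc[OF prod_mor_hom[OF id_hom curry_hom[OF snd_hom]] ev_hom c] ev_curry[OF snd_hom]
    by simp
  finally show ?thesis .
qed

lemma stT_mor_snd_transpose:
  assumes g: "g \<in> hom C A B"
  shows "stT_mor C S A g \<cdot> snd_transpose S A = snd_transpose S B \<cdot> prod_mor C S A (Id C S) g"
  unfolding stT_mor_def
  using curry_comp_ev_snd_transpose[OF prod_mor_hom[OF id_hom g]]
    snd_transpose_comp[OF prod_mor_hom[OF id_hom g]]
  by simp

lemma st_mu_snd_transpose:
  "st_mu C S X \<cdot> snd_transpose S (stT C S X) = snd_transpose S X \<cdot> Ev C S (Prod C S X)"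
  unfolding st_mu_def
  using curry_comp_ev_snd_transpose[OF ev_hom[of S "Prod C S X", folded stT_def]]
    snd_transpose_comp[OF ev_hom[of S "Prod C S X", folded stT_def]]
  by simp

lemma T_algebra_hom:
  assumes "T_algebra C S X h"
  shows "h \<in> hom C (stT C S X) X"
  using assms unfolding T_algebra_def by simp

lemma f_alg_hom:
  assumes "T_algebra C S X h"
  shows "f_alg C S X h \<in> hom C (Prod C S X) X"
  unfolding f_alg_def using comp_hom[OF snd_transpose_hom T_algebra_hom[OF assms]] .

lemma f_alg_action:
  assumes alg: "T_algebra C S X h"
  shows "f_alg C S X h \<cdot> prod_mor C S (stT C S X) (Id C S) h = f_alg C S X h \<cdot> Ev C S (Prod C S X)"
proof -
  have h: "h \<in> hom C (stT C S X) X"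
    using alg by (rule T_algebra_hom)
  have "f_alg C S X h \<cdot> prod_mor C S (stT C S X) (Id C S) h
      = h \<cdot> (snd_transpose S X \<cdot> prod_mor C S (stT C S X) (Id C S) h)"
    unfolding f_alg_def
    using comp_assoc[OF prod_mor_hom[OF id_hom h] snd_transpose_hom h] by simp
  also have "\<dots> = (h \<cdot> stT_mor C S (stT C S X) h) \<cdot> snd_transpose S (stT C S X)"
    using stT_mor_snd_transpose[OF h] comp_assoc[OF snd_transpose_hom stT_mor_hom[OF h] h] by simp
  also have "\<dots> = h \<cdot> (st_mu C S X \<cdot> snd_transpose S (stT C S X))"
    using alg comp_assoc[OF snd_transpose_hom st_mu_hom h] unfolding T_algebra_def by simp
  also have "\<dots> = f_alg C S X h \<cdot> Ev C S (Prod C S X)"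
    unfolding f_alg_def st_mu_snd_transpose
    using comp_assoc[OF ev_hom[of S "Prod C S X", folded stT_def] snd_transpose_hom h] by simp
  finally show ?thesis .
qed

lemma f_alg_idem:
  assumes alg: "T_algebra C S X h"
  shows "f_alg C S X h \<cdot> prod_mor C S (Prod C S X) (Id C S) (f_alg C S X h)
    = f_alg C S X h \<cdot> Snd C S (Prod C S X)"
proof -
  have h: "h \<in> hom C (stT C S X) X"
    using alg by (rule T_algebra_hom)
  have "f_alg C S X h \<cdot> prod_mor C S (Prod C S X) (Id C S) (f_alg C S X h)
      = (f_alg C S X h \<cdot> prod_mor C S (stT C S X) (Id C S) h)
          \<cdot> prod_mor C S (Prod C S X) (Id C S) (snd_transpose S X)"
    unfolding f_alg_def[of C S X h]
    using prod_mor_Id_comp[OF h snd_transpose_hom]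
      comp_assoc[OF prod_mor_hom[OF id_hom snd_transpose_hom] prod_mor_hom[OF id_hom h]
        f_alg_hom[OF alg, unfolded f_alg_def]]
    by simp
  also have "\<dots> = f_alg C S X h \<cdot> Snd C S (Prod C S X)"
    unfolding f_alg_action[OF alg]
    using comp_assoc[OF prod_mor_hom[OF id_hom curry_hom[OF snd_hom]] ev_hom f_alg_hom[OF alg]]
      ev_curry[OF snd_hom]
    by simp
  finally show ?thesis .
qed

lemma f_alg_comp_prod_mor:
  assumes alg: "T_algebra C S X h"
    and e: "e \<in> hom C (Prod C S X) Y" and re: "regular_epi C e"
    and m: "m \<in> hom C Y X" and fac: "f_alg C S X h = m \<cdot> e"
  shows "f_alg C S X h \<cdot> prod_mor C S Y (Id C S) m = m \<cdot> Snd C S Y"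
proof (rule prod_mor_regular_epi_cancel[OF re e])
  let ?f = "f_alg C S X h"
  have f: "?f \<in> hom C (Prod C S X) X"
    using alg by (rule f_alg_hom)
  show "?f \<cdot> prod_mor C S Y (Id C S) m \<in> hom C (Prod C S Y) X"
    using comp_hom[OF prod_mor_hom[OF id_hom m] f] .
  show "m \<cdot> Snd C S Y \<in> hom C (Prod C S Y) X"
    using comp_hom[OF snd_hom m] .
  have "(?f \<cdot> prod_mor C S Y (Id C S) m) \<cdot> prod_mor C S (Prod C S X) (Id C S) e
      = ?f \<cdot> prod_mor C S (Prod C S X) (Id C S) ?f"
    using comp_assoc[OF prod_mor_hom[OF id_hom e] prod_mor_hom[OF id_hom m] f]
      prod_mor_Id_comp[OF m e] fac
    by simp
  also have "\<dots> = (m \<cdot> e) \<cdot> Snd C S (Prod C S X)"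
    using f_alg_idem[OF alg] fac by simp
  also have "\<dots> = (m \<cdot> Snd C S Y) \<cdot> prod_mor C S (Prod C S X) (Id C S) e"
    using comp_assoc[OF snd_hom e m] comp_assoc[OF prod_mor_hom[OF id_hom e] snd_hom m]
      snd_prod_mor[OF id_hom e]
    by simp
  finally show "(?f \<cdot> prod_mor C S Y (Id C S) m) \<cdot> prod_mor C S (Prod C S X) (Id C S) e
      = (m \<cdot> Snd C S Y) \<cdot> prod_mor C S (Prod C S X) (Id C S) e" .
qed

text \<open>In elements, \<phi> \<mapsto> h (\<lambda>s. (s, m (\<phi> s))).\<close>

definition alg_section :: "'o \<Rightarrow> 'o \<Rightarrow> 'm \<Rightarrow> 'm \<Rightarrow> 'm" where
  "alg_section S Y h m = h \<cdot> Curry C S (Exp C S Y)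
     (prod_mor C S Y (Id C S) m \<cdot> Pair C (Fst C S (Exp C S Y)) (Ev C S Y))"

lemma alg_section_hom:
  assumes "T_algebra C S X h" and m: "m \<in> hom C Y X"
  shows "alg_section S Y h m \<in> hom C (Exp C S Y) X"
  unfolding alg_section_def
  using comp_hom[OF curry_hom[OF comp_hom[OF pair_hom[OF fst_hom ev_hom] prod_mor_hom[OF id_hom m]]]
      T_algebra_hom[OF assms(1), unfolded stT_def]] .

lemma curry_comp_alg_section:
  assumes alg: "T_algebra C S X h"
    and e: "e \<in> hom C (Prod C S X) Y" and re: "regular_epi C e"
    and m: "m \<in> hom C Y X" and mono: "is_mono C m" and fac: "f_alg C S X h = m \<cdot> e"
  shows "Curry C S X e \<cdot> alg_section S Y h m = Id C (Exp C S Y)"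
proof -
  let ?f = "f_alg C S X h" and ?\<sigma> = "alg_section S Y h m"
  define c where "c = prod_mor C S Y (Id C S) m \<cdot> Pair C (Fst C S (Exp C S Y)) (Ev C S Y)"
  have h: "h \<in> hom C (stT C S X) X"
    using alg by (rule T_algebra_hom)
  have c: "c \<in> hom C (Prod C S (Exp C S Y)) (Prod C S X)"
    unfolding c_def by (rule comp_hom[OF pair_hom[OF fst_hom ev_hom] prod_mor_hom[OF id_hom m]])
  have \<sigma>: "?\<sigma> \<in> hom C (Exp C S Y) X"
    using alg m by (rule alg_section_hom)
  have "m \<cdot> (e \<cdot> prod_mor C S (Exp C S Y) (Id C S) ?\<sigma>) = ?f \<cdot> prod_mor C S (Exp C S Y) (Id C S) ?\<sigma>"
    using comp_assoc[OF prod_mor_hom[OF id_hom \<sigma>] e m] fac by simp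
  also have "\<dots> = (?f \<cdot> prod_mor C S (stT C S X) (Id C S) h)
      \<cdot> prod_mor C S (Exp C S Y) (Id C S) (Curry C S (Exp C S Y) c)"
    unfolding alg_section_def c_def[symmetric]
    using prod_mor_Id_comp[OF h curry_hom[OF c, folded stT_def]]
      comp_assoc[OF prod_mor_hom[OF id_hom curry_hom[OF c, folded stT_def]]
        prod_mor_hom[OF id_hom h] f_alg_hom[OF alg]]
    by simp
  also have "\<dots> = ?f \<cdot> c"
    unfolding f_alg_action[OF alg]
    using comp_assoc[OF prod_mor_hom[OF id_hom curry_hom[OF c]] ev_hom f_alg_hom[OF alg]] ev_curry[OF c]
    by simp
  also have "\<dots> = m \<cdot> Ev C S Y"
    unfolding c_def
    using comp_assoc[OF pair_hom[OF fst_hom ev_hom] prod_mor_hom[OF id_hom m] f_alg_hom[OF alg]]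
      f_alg_comp_prod_mor[OF alg e re m fac] comp_assoc[OF pair_hom[OF fst_hom ev_hom] snd_hom m]
      snd_pair[OF fst_hom ev_hom]
    by simp
  finally have "e \<cdot> prod_mor C S (Exp C S Y) (Id C S) ?\<sigma> = Ev C S Y"
    using mono_cancel[OF mono m comp_hom[OF prod_mor_hom[OF id_hom \<sigma>] e] ev_hom] by blast
  then show ?thesis
    using curry_comp[OF e \<sigma>] curry_ev by simp
qed

end

theorem mainTheorem8:
  fixes C :: "('o, 'm) ccc_data"
  assumes "ccc C"
    and "has_regular_epi_mono_factorizations C"
    and "\<exists>p. p \<in> hom C (Term C) S"
    and "T_algebra C S X h"
    and "e \<in> hom C (Prod C S X) Y" and "regular_epi C e"
    and "m \<in> hom C Y X" and "is_mono C m"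
    and "f_alg C S X h = Comp C m e"
  shows "\<exists>s \<in> hom C (Exp C S Y) X. Comp C (Curry C S X e) s = Id C (Exp C S Y)"
proof -
  interpret ccc C by (fact assms(1))
  show ?thesis
    using alg_section_hom[OF assms(4,7)] curry_comp_alg_section[OF assms(4-9)] by blast
qed

end
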